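(* Let $G$ be a torsion-free group, $\alpha$ a zero divisor in $\mathbb{F}_2[G]$ with $|supp(\alpha)|=4$ and $|S_\alpha|=10$, and $\beta$ a mate of $\alpha$. Then every vertex of $\mathcal{Z}(\alpha,\beta)$ has degree in $\{3,4,5,6,7,8,10\}$.
   Context: $supp(\gamma)=\{x\in G:\gamma_x\ne0\}$; $S_\alpha=\{h^{-1}h':h\ne h',\ h,h'\in supp(\alpha)\}$. A mate of $\alpha$ is a non-zero $\beta$ with $\alpha\beta=0$ of minimal support size among all non-zero $\beta'$ with $\alpha\beta'=0$. $Z(\alpha,\beta)$ is the multigraph with vertex set $supp(\beta)$ whose edges are the sets $\{(h,h',g,g'),(h',h,g',g)\}$ with $h,h'\in supp(\alpha)$, $g,g'\in supp(\beta)$, $g\ne g'$, $hg=h'g'$, each joining $g$ and $g'$. $\mathcal{Z}(\alpha,\beta)$ is the simple graph obtained from $Z(\alpha,\beta)$ by replacing each set of multiple edges between two vertices by a single edge (so $g\sim g'$ in $\mathcal{Z}$ iff they are joined by at least one edge in $Z$). *)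

theory Defs
  imports "HOL-Algebra.Group"
begin

text \<open>Elements of the group algebra F_2[G] are identified with their supports:
  a finitely supported function G -> F_2 is the same as a finite subset of carrier G.\<close>

definition f2_elem :: "('a, 'b) monoid_scheme \<Rightarrow> 'a set \<Rightarrow> bool" where
  "f2_elem G A \<longleftrightarrow> finite A \<and> A \<subseteq> carrier G"

definition f2_mult :: "('a, 'b) monoid_scheme \<Rightarrow> 'a set \<Rightarrow> 'a set \<Rightarrow> 'a set" where
  "f2_mult G A B = {x \<in> carrier G. odd (card {(h, g). h \<in> A \<and> g \<in> B \<and> h \<otimes>\<^bsub>G\<^esub> g = x})}"

definition torsion_free :: "('a, 'b) monoid_scheme \<Rightarrow> bool" where
  "torsion_free G \<longleftrightarrow>
     (\<forall>x \<in> carrier G. x \<noteq> \<one>\<^bsub>G\<^esub> \<longrightarrow> (\<forall>n::nat. n > 0 \<longrightarrow> x [^]\<^bsub>G\<^esub> n \<noteq> \<one>\<^bsub>G\<^esub>))"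

definition zero_divisor_f2 :: "('a, 'b) monoid_scheme \<Rightarrow> 'a set \<Rightarrow> bool" where
  "zero_divisor_f2 G A \<longleftrightarrow> f2_elem G A \<and> A \<noteq> {} \<and>
     (\<exists>B. f2_elem G B \<and> B \<noteq> {} \<and> f2_mult G A B = {})"

definition S_set :: "('a, 'b) monoid_scheme \<Rightarrow> 'a set \<Rightarrow> 'a set" where
  "S_set G A = {inv\<^bsub>G\<^esub> h \<otimes>\<^bsub>G\<^esub> h' | h h'. h \<in> A \<and> h' \<in> A \<and> h \<noteq> h'}"

definition is_mate :: "('a, 'b) monoid_scheme \<Rightarrow> 'a set \<Rightarrow> 'a set \<Rightarrow> bool" where
  "is_mate G A B \<longleftrightarrow> f2_elem G B \<and> B \<noteq> {} \<and> f2_mult G A B = {} \<and>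
     (\<forall>B'. f2_elem G B' \<and> B' \<noteq> {} \<and> f2_mult G A B' = {} \<longrightarrow> card B \<le> card B')"

text \<open>Adjacency in the simple graph \<Z>(alpha,beta): g ~ g' iff joined by at least one edge of Z(alpha,beta).\<close>
definition Z_adj :: "('a, 'b) monoid_scheme \<Rightarrow> 'a set \<Rightarrow> 'a set \<Rightarrow> 'a \<Rightarrow> 'a \<Rightarrow> bool" where
  "Z_adj G A B g g' \<longleftrightarrow> g \<in> B \<and> g' \<in> B \<and> g \<noteq> g' \<and>
     (\<exists>h \<in> A. \<exists>h' \<in> A. h \<otimes>\<^bsub>G\<^esub> g = h' \<otimes>\<^bsub>G\<^esub> g')"

definition Z_degree :: "('a, 'b) monoid_scheme \<Rightarrow> 'a set \<Rightarrow> 'a set \<Rightarrow> 'a \<Rightarrow> nat" where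
  "Z_degree G A B g = card {g'. Z_adj G A B g g'}"

end

(*
  Call a pair (h, h') of distinct elements of supp alpha adjacent to g if h^-1 h' g lies in
  supp beta. The neighbours of g are the elements s g with s a quotient h^-1 h' of an adjacent
  pair, so the degree of g is the number of such quotients, at most |S_alpha| = 10.

  Since alpha beta = 0, the coefficient of b g vanishes for every b in supp alpha; counting its
  representations shows that the number of k with (k, b) adjacent is odd. If exactly one
  quotient a^-1 b were missing, that number would be |supp alpha - {a, b}| = 2, so the degree
  is not 9.

  The 12 pairs have only 10 quotients, and h^-1 h' differs from its inverse h'^-1 h because G
  has no element of order 2; hence the only coincidence of quotients is a single equation
  a^-1 b = c^-1 d together with its inverse. If the degree were at most 2, choosing one
  adjacent pair (k, b) for each b forces such a coincidence with {a, b, c, d} = supp alpha.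
  Then alpha = (1 + v)(a + b) with v = c a^-1, which is impossible: in a torsion-free group
  neither 1 + v (v <> 1) nor a + b (a <> b) annihilates a non-zero element, as the support of
  the product would be invariant under a non-trivial translation.
*)

theory Submission
  imports Defs
begin

lemma card_image_add_fibre_excess_le:
  assumes "finite P" "V \<subseteq> f ` P"
  shows "card (f ` P) + (\<Sum>v\<in>V. card {p \<in> P. f p = v} - 1) \<le> card P"
proof -
  let ?fib = "\<lambda>v. card {p \<in> P. f p = v}"
  have pos: "?fib v \<ge> 1" if "v \<in> f ` P" for v
    using that assms(1) by (auto simp: Suc_le_eq card_gt_0_iff)
  have "card (f ` P) + (\<Sum>v\<in>V. ?fib v - 1) \<le> card (f ` P) + (\<Sum>v\<in>f ` P. ?fib v - 1)"
    using assms by (intro add_left_mono sum_mono2) auto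
  also have "\<dots> = (\<Sum>v\<in>f ` P. 1 + (?fib v - 1))"
    by (simp only: sum.distrib) simp
  also have "\<dots> = (\<Sum>v\<in>f ` P. ?fib v)"
    using pos by (intro sum.cong refl) (metis le_add_diff_inverse)
  also have "\<dots> = card P"
    using sum.image_gen[OF assms(1), of "\<lambda>_. 1 :: nat" f] by simp
  finally show ?thesis .
qed

lemma card_ge_3_of_two_pairs:
  assumes "x1 \<noteq> x2" "y1 \<noteq> y2" "{y1, y2} \<noteq> {x1, x2}"
  shows "card {x1, x2, y1, y2} \<ge> 3"
proof -
  have "\<not> {y1, y2} \<subseteq> {x1, x2}"
    using assms card_subset_eq[of "{x1, x2}" "{y1, y2}"] by auto
  then obtain y where y: "y \<in> {y1, y2}" "y \<notin> {x1, x2}" by blast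
  have "card {x1, x2, y} \<le> card {x1, x2, y1, y2}"
    using y(1) by (intro card_mono) auto
  moreover have "card {x1, x2, y} = 3" using assms(1) y(2) by auto
  ultimately show ?thesis by simp
qed

text \<open>An involution \<open>s\<close> of \<open>P\<close> mapping fibres of \<open>f\<close> to fibres and moving every point
  to another fibre; in the application \<open>s\<close> swaps the entries of a pair and \<open>f\<close> is \<open>(h, h') \<mapsto> h\<^sup>-\<^sup>1h'\<close>.
  Every collision of \<open>f\<close> then comes with a second one, its image under \<open>s\<close>.\<close>

locale fibre_involution =
  fixes P :: "'p set" and s :: "'p \<Rightarrow> 'p" and f :: "'p \<Rightarrow> 'v"
  assumes fin: "finite P" and s_in: "\<And>p. p \<in> P \<Longrightarrow> s p \<in> P"
    and s_s: "\<And>p. s (s p) = p" and f_s: "\<And>p. p \<in> P \<Longrightarrow> f (s p) \<noteq> f p"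
    and f_s_cong: "\<And>p q. p \<in> P \<Longrightarrow> q \<in> P \<Longrightarrow> f p = f q \<Longrightarrow> f (s p) = f (s q)"
begin

lemma collision_unique:
  assumes excess: "card P = card (f ` P) + 2"
    and mem: "p1 \<in> P" "p2 \<in> P" "q1 \<in> P" "q2 \<in> P"
    and ne: "p1 \<noteq> p2" "q1 \<noteq> q2" and eq: "f p1 = f p2" "f q1 = f q2"
  shows "{q1, q2} = {p1, p2} \<or> {q1, q2} = {s p1, s p2}"
proof (rule ccontr)
  assume neither: "\<not> ?thesis"
  define fib where "fib v = card {p \<in> P. f p = v}" for v
  have fib_ge: "fib v \<ge> card X" if "X \<subseteq> P" "\<forall>x\<in>X. f x = v" for X v
    unfolding fib_def using that fin by (intro card_mono) auto
  have sP: "s p1 \<in> P" "s p2 \<in> P" using s_in mem by auto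
  have ne_s: "s p1 \<noteq> s p2" using ne(1) s_s by metis
  have eq_s: "f (s p1) = f (s p2)" using f_s_cong mem eq by blast
  have c_c': "f (s p1) \<noteq> f p1" using f_s mem by blast
  have fib_c: "fib (f p1) \<ge> 2"
    using fib_ge[of "{p1, p2}" "f p1"] mem ne eq by simp
  have fib_c': "fib (f (s p1)) \<ge> 2"
    using fib_ge[of "{s p1, s p2}" "f (s p1)"] sP ne_s eq_s by simp
  have "card P \<ge> card (f ` P) + 3"
  proof -
    have bound: "card (f ` P) + sum (\<lambda>v. fib v - 1) V \<le> card P" if "V \<subseteq> f ` P" for V
      using card_image_add_fibre_excess_le[OF fin that] unfolding fib_def .
    have V2: "{f p1, f (s p1)} \<subseteq> f ` P" using mem sP by auto
    consider "f q1 = f p1" | "f q1 = f (s p1)" | "f q1 \<notin> {f p1, f (s p1)}" by blast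
    then show ?thesis
    proof cases
      case 1
      have "card {p1, p2, q1, q2} \<le> fib (f p1)"
        using fib_ge[of "{p1, p2, q1, q2}" "f p1"] mem eq 1 by simp
      moreover have "card {p1, p2, q1, q2} \<ge> 3"
        using card_ge_3_of_two_pairs[OF ne] neither by simp
      ultimately show ?thesis using bound[OF V2] fib_c' c_c' by simp
    next
      case 2
      have "card {s p1, s p2, q1, q2} \<le> fib (f (s p1))"
        using fib_ge[of "{s p1, s p2, q1, q2}" "f (s p1)"] mem sP eq eq_s 2 by simp
      moreover have "card {s p1, s p2, q1, q2} \<ge> 3"
        using card_ge_3_of_two_pairs[OF ne_s ne(2)] neither by simp
      ultimately show ?thesis using bound[OF V2] fib_c c_c' by simp
    next
      case 3
      have "fib (f q1) \<ge> 2" using fib_ge[of "{q1, q2}" "f q1"] mem ne eq by simp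
      moreover have "{f p1, f (s p1), f q1} \<subseteq> f ` P" using V2 mem by simp
      moreover have "f p1 \<notin> {f (s p1), f q1}" "f (s p1) \<notin> {f q1}" using c_c' 3 by auto
      ultimately show ?thesis
        using bound[of "{f p1, f (s p1), f q1}"] fib_c fib_c' by simp
    qed
  qed
  then show False using excess by simp
qed

lemma no_triple_collision:
  assumes excess: "card P = card (f ` P) + 2"
    and mem: "p \<in> P" "q \<in> P" "r \<in> P" and ne: "p \<noteq> q" "p \<noteq> r" "q \<noteq> r"
    and eq: "f p = f q" "f p = f r"
  shows False
proof -
  have "{p, r} = {p, q} \<or> {p, r} = {s p, s q}"
    using collision_unique[OF excess mem(1,2,1,3)] ne eq by blast
  moreover have "f (s p) \<noteq> f p" "f (s q) = f (s p)"
    using f_s f_s_cong mem eq by metis+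
  ultimately show False using ne by (auto simp: doubleton_eq_iff)
qed

end

lemma two_collisions_of_card_image_le_2:
  assumes X: "card X = 4" and img: "card (f ` X) \<le> 2"
    and no_triple: "\<And>p q r. p \<in> X \<Longrightarrow> q \<in> X \<Longrightarrow> r \<in> X \<Longrightarrow> p \<noteq> q \<Longrightarrow> p \<noteq> r \<Longrightarrow> q \<noteq> r \<Longrightarrow>
      f p = f q \<Longrightarrow> f p = f r \<Longrightarrow> False"
  obtains p1 p2 p3 p4 where "X = {p1, p2, p3, p4}" "distinct [p1, p2, p3, p4]"
    "f p1 = f p2" "f p3 = f p4"
proof -
  have fin: "finite X" using X by (metis card.infinite zero_neq_numeral)
  have "\<not> inj_on f X" using X img inj_on_iff_eq_card[OF fin, of f] by simp
  then obtain p1 p2 where p12: "p1 \<in> X" "p2 \<in> X" "p1 \<noteq> p2" "f p1 = f p2"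
    unfolding inj_on_def by blast
  have "card (X - {p1, p2}) = 2" using X p12 by (simp add: card_Diff_subset)
  then obtain p3 p4 where p34: "X - {p1, p2} = {p3, p4}" "p3 \<noteq> p4"
    by (auto simp: card_2_iff)
  have X_eq: "X = {p1, p2, p3, p4}" using p12 p34 by blast
  have dist: "distinct [p1, p2, p3, p4]" using p12 p34 by auto
  have "f p3 \<noteq> f p1" "f p4 \<noteq> f p1"
    using no_triple[of p1 p2 p3] no_triple[of p1 p2 p4] p12 dist X_eq by auto
  moreover have "card {f p1, f p3, f p4} \<le> 2" using img X_eq p12 by simp
  ultimately have "f p3 = f p4" by (cases "f p3 = f p4") auto
  then show thesis using that X_eq dist p12 by blast
qed

lemma obtain_snd_section:
  assumes "\<And>b. b \<in> A \<Longrightarrow> \<exists>k. (k, b) \<in> Q"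
  obtains X where "X \<subseteq> Q" "inj_on snd X" "snd ` X = A"
proof
  define k where "k b = (SOME k. (k, b) \<in> Q)" for b
  have kb: "(k b, b) \<in> Q" if "b \<in> A" for b
    unfolding k_def using someI_ex[OF assms[OF that]] .
  show "(\<lambda>b. (k b, b)) ` A \<subseteq> Q" using kb by auto
  show "inj_on snd ((\<lambda>b. (k b, b)) ` A)" by (auto intro: inj_onI)
  show "snd ` (\<lambda>b. (k b, b)) ` A = A" by (simp add: image_image)
qed

definition distinct_pairs :: "'a set \<Rightarrow> ('a \<times> 'a) set" where
  "distinct_pairs A = {(h, h'). h \<in> A \<and> h' \<in> A \<and> h \<noteq> h'}"

definition left_quot :: "('a, 'b) monoid_scheme \<Rightarrow> 'a \<times> 'a \<Rightarrow> 'a" where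
  "left_quot G p = inv\<^bsub>G\<^esub> (fst p) \<otimes>\<^bsub>G\<^esub> snd p"

definition adj_pairs :: "('a, 'b) monoid_scheme \<Rightarrow> 'a set \<Rightarrow> 'a set \<Rightarrow> 'a \<Rightarrow> ('a \<times> 'a) set" where
  "adj_pairs G A B g = {p \<in> distinct_pairs A. left_quot G p \<otimes>\<^bsub>G\<^esub> g \<in> B}"

lemma adj_pairs_subset: "adj_pairs G A B g \<subseteq> distinct_pairs A"
  unfolding adj_pairs_def by auto

lemma finite_distinct_pairs: "finite A \<Longrightarrow> finite (distinct_pairs A)"
  by (rule finite_subset[of _ "A \<times> A"]) (auto simp: distinct_pairs_def)

lemma card_distinct_pairs:
  assumes "finite A"
  shows "card (distinct_pairs A) = card A * card A - card A"
proof -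
  have "distinct_pairs A = A \<times> A - (\<lambda>x. (x, x)) ` A"
    unfolding distinct_pairs_def by auto
  moreover have "card ((\<lambda>x. (x, x)) ` A) = card A"
    by (rule card_image) (auto simp: inj_on_def)
  ultimately show ?thesis
    using assms by (simp add: card_Diff_subset card_cartesian_product image_subset_iff)
qed

definition f2_reps :: "('a, 'b) monoid_scheme \<Rightarrow> 'a set \<Rightarrow> 'a set \<Rightarrow> 'a \<Rightarrow> ('a \<times> 'a) set" where
  "f2_reps G A B z = {(h, y). h \<in> A \<and> y \<in> B \<and> h \<otimes>\<^bsub>G\<^esub> y = z}"

lemma f2_mult_eq: "f2_mult G A B = {z \<in> carrier G. odd (card (f2_reps G A B z))}"
  unfolding f2_mult_def f2_reps_def ..

lemma even_card_f2_reps: "f2_mult G A B = {} \<Longrightarrow> z \<in> carrier G \<Longrightarrow> even (card (f2_reps G A B z))"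
  unfolding f2_mult_eq by blast

lemma finite_f2_reps: "finite A \<Longrightarrow> finite B \<Longrightarrow> finite (f2_reps G A B z)"
  by (rule finite_subset[of _ "A \<times> B"]) (auto simp: f2_reps_def)

lemma finite_f2_mult:
  assumes "finite A" "finite B"
  shows "finite (f2_mult G A B)"
proof (rule finite_subset)
  show "f2_mult G A B \<subseteq> (\<lambda>(h, y). h \<otimes>\<^bsub>G\<^esub> y) ` (A \<times> B)"
  proof
    fix z assume "z \<in> f2_mult G A B"
    then have "f2_reps G A B z \<noteq> {}" unfolding f2_mult_eq by (auto simp: card_eq_0_iff)
    then show "z \<in> (\<lambda>(h, y). h \<otimes>\<^bsub>G\<^esub> y) ` (A \<times> B)" unfolding f2_reps_def by force
  qed
qed (use assms in simp)

lemma card_f2_reps_Un: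
  assumes "A1 \<inter> A2 = {}" "finite A1" "finite A2" "finite B"
  shows "card (f2_reps G (A1 \<union> A2) B z) = card (f2_reps G A1 B z) + card (f2_reps G A2 B z)"
proof -
  have "f2_reps G (A1 \<union> A2) B z = f2_reps G A1 B z \<union> f2_reps G A2 B z"
    "f2_reps G A1 B z \<inter> f2_reps G A2 B z = {}"
    using assms(1) unfolding f2_reps_def by auto
  then show ?thesis using assms by (simp add: card_Un_disjoint finite_f2_reps)
qed

context group
begin

lemma left_translation_stable_imp_one:
  assumes tf: "torsion_free G" and y: "y \<in> carrier G"
    and X: "X \<subseteq> carrier G" "finite X" "z \<in> X" and stable: "\<And>x. x \<in> X \<Longrightarrow> y \<otimes> x \<in> X"
  shows "y = \<one>"
proof (rule ccontr)
  assume "y \<noteq> \<one>"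
  have zc: "z \<in> carrier G" using X by auto
  have orbit: "y [^] n \<otimes> z \<in> X" for n :: nat
  proof (induction n)
    case (Suc n)
    have "y [^] Suc n \<otimes> z = y \<otimes> (y [^] n \<otimes> z)"
      using y zc by (simp only: nat_pow_Suc2[OF y] m_assoc nat_pow_closed)
    then show ?case using stable Suc by simp
  qed (use X zc in simp)
  have "\<not> inj (\<lambda>n::nat. y [^] n \<otimes> z)"
    using inj_on_finite[of _ UNIV X] orbit X(2) by auto
  then obtain m n :: nat where "m \<noteq> n" "y [^] m \<otimes> z = y [^] n \<otimes> z"
    unfolding inj_def by blast
  then have "m \<noteq> n" "y [^] m = y [^] n" using y zc by simp_all
  then obtain m n :: nat where mn: "m < n" "y [^] m = y [^] n"
    by (metis linorder_neqE_nat)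
  then have "y [^] (n - m) = \<one>" using y pow_eq_div2 by metis
  then show False using tf y \<open>y \<noteq> \<one>\<close> mn(1) unfolding torsion_free_def by auto
qed

lemma inv_eq_self_imp_one:
  assumes tf: "torsion_free G" and t: "t \<in> carrier G" and "inv t = t"
  shows "t = \<one>"
proof -
  have "t [^] (2::nat) = t \<otimes> inv t"
    using t assms(3) by (simp add: numeral_2_eq_2)
  then have "t [^] (2::nat) = \<one>" using t by simp
  then show ?thesis using tf t unfolding torsion_free_def by auto
qed

lemma left_quot_closed:
  "h \<in> carrier G \<Longrightarrow> h' \<in> carrier G \<Longrightarrow> left_quot G (h, h') \<in> carrier G"
  by (simp add: left_quot_def)

lemma mult_left_quot [simp]:
  "h \<in> carrier G \<Longrightarrow> h' \<in> carrier G \<Longrightarrow> h \<otimes> left_quot G (h, h') = h'"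
  by (simp add: left_quot_def m_assoc[symmetric])

lemma left_quot_eq_one_iff:
  assumes "h \<in> carrier G" "h' \<in> carrier G"
  shows "left_quot G (h, h') = \<one> \<longleftrightarrow> h = h'"
proof
  assume "left_quot G (h, h') = \<one>"
  then have "h \<otimes> left_quot G (h, h') = h" using assms by simp
  then show "h = h'" using assms by simp
qed (simp add: left_quot_def assms)

lemma left_quot_eq_iff_fst:
  assumes "k \<in> carrier G" "a \<in> carrier G" "b \<in> carrier G"
  shows "left_quot G (k, b) = left_quot G (a, b) \<longleftrightarrow> k = a"
proof
  assume "left_quot G (k, b) = left_quot G (a, b)"
  then have "inv k = inv a" using assms unfolding left_quot_def by simp
  then show "k = a" using assms by (metis inv_inv)
qed simp

lemma left_quot_swap:
  "p \<in> carrier G \<times> carrier G \<Longrightarrow> left_quot G (prod.swap p) = inv (left_quot G p)"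
  by (cases p) (simp add: left_quot_def inv_mult_group)

lemma left_quot_swap_ne:
  assumes tf: "torsion_free G" and p: "p \<in> carrier G \<times> carrier G" "fst p \<noteq> snd p"
  shows "left_quot G (prod.swap p) \<noteq> left_quot G p"
proof -
  obtain h h' where hh': "p = (h, h')" "h \<in> carrier G" "h' \<in> carrier G" "h \<noteq> h'"
    using p by (cases p) auto
  then have "left_quot G p \<noteq> \<one>" using left_quot_eq_one_iff by simp
  then have "inv (left_quot G p) \<noteq> left_quot G p"
    using inv_eq_self_imp_one[OF tf] hh' left_quot_closed by blast
  then show ?thesis using left_quot_swap[OF p(1)] by simp
qed

lemma fibre_involution_left_quot:
  assumes tf: "torsion_free G" and A: "A \<subseteq> carrier G" "finite A"
  shows "fibre_involution (distinct_pairs A) prod.swap (left_quot G)"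
proof
  have carr: "p \<in> carrier G \<times> carrier G" "fst p \<noteq> snd p" if "p \<in> distinct_pairs A" for p
    using that A(1) unfolding distinct_pairs_def by auto
  show "finite (distinct_pairs A)" using A(2) by (rule finite_distinct_pairs)
  show "prod.swap p \<in> distinct_pairs A" if "p \<in> distinct_pairs A" for p
    using that unfolding distinct_pairs_def by auto
  show "left_quot G (prod.swap p) \<noteq> left_quot G p" if "p \<in> distinct_pairs A" for p
    using left_quot_swap_ne[OF tf carr[OF that]] .
  show "left_quot G (prod.swap p) = left_quot G (prod.swap q)"
    if "p \<in> distinct_pairs A" "q \<in> distinct_pairs A" "left_quot G p = left_quot G q" for p q
    using that left_quot_swap carr by simp
qed simp

lemma S_set_eq_image_left_quot: "S_set G A = left_quot G ` distinct_pairs A"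
proof (intro equalityI subsetI)
  fix x assume "x \<in> S_set G A"
  then obtain h h' where "x = left_quot G (h, h')" "(h, h') \<in> distinct_pairs A"
    unfolding S_set_def distinct_pairs_def left_quot_def by auto
  then show "x \<in> left_quot G ` distinct_pairs A" by blast
next
  fix x assume "x \<in> left_quot G ` distinct_pairs A"
  then obtain h h' where "x = left_quot G (h, h')" "(h, h') \<in> distinct_pairs A" by auto
  then show "x \<in> S_set G A" unfolding S_set_def distinct_pairs_def left_quot_def by auto
qed

lemma card_f2_reps_left_translate:
  assumes v: "v \<in> carrier G" and A: "A \<subseteq> carrier G" and B: "B \<subseteq> carrier G"
    and z: "z \<in> carrier G"
  shows "card (f2_reps G ((\<otimes>) v ` A) B z) = card (f2_reps G A B (inv v \<otimes> z))"
proof -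
  let ?t = "\<lambda>(h, y). (v \<otimes> h, y)"
  have "f2_reps G ((\<otimes>) v ` A) B z = ?t ` f2_reps G A B (inv v \<otimes> z)"
  proof (intro equalityI subsetI)
    fix q assume "q \<in> f2_reps G ((\<otimes>) v ` A) B z"
    then obtain h y where q: "q = (v \<otimes> h, y)" "h \<in> A" "y \<in> B" "v \<otimes> h \<otimes> y = z"
      unfolding f2_reps_def by blast
    have "h \<in> carrier G" "y \<in> carrier G" using q A B by auto
    then have "inv v \<otimes> z = h \<otimes> y" using q(4) v z by (auto simp: inv_solve_left' m_assoc)
    then show "q \<in> ?t ` f2_reps G A B (inv v \<otimes> z)"
      using q unfolding f2_reps_def by force
  next
    fix q assume "q \<in> ?t ` f2_reps G A B (inv v \<otimes> z)"
    then obtain h y where q: "q = (v \<otimes> h, y)" "h \<in> A" "y \<in> B" "h \<otimes> y = inv v \<otimes> z"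
      unfolding f2_reps_def by auto
    have "h \<in> carrier G" "y \<in> carrier G" using q A B by auto
    then have "v \<otimes> h \<otimes> y = z" using q(4) v z by (simp add: inv_solve_left m_assoc)
    then show "q \<in> f2_reps G ((\<otimes>) v ` A) B z" using q unfolding f2_reps_def by blast
  qed
  moreover have "inj_on ?t (carrier G \<times> UNIV)" using v by (auto intro!: inj_onI)
  then have "inj_on ?t (f2_reps G A B (inv v \<otimes> z))"
    by (rule inj_on_subset) (use A in \<open>auto simp: f2_reps_def\<close>)
  ultimately show ?thesis by (simp add: card_image)
qed

lemma f2_mult_eq_empty_of_translate_Un:
  assumes tf: "torsion_free G" and v: "v \<in> carrier G"
    and A: "A \<subseteq> carrier G" "finite A" and B: "B \<subseteq> carrier G" "finite B"
    and disj: "A \<inter> (\<otimes>) v ` A = {}" and zero: "f2_mult G (A \<union> (\<otimes>) v ` A) B = {}"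
  shows "f2_mult G A B = {}"
proof (rule ccontr)
  let ?C = "f2_mult G A B"
  assume "?C \<noteq> {}"
  then obtain z0 where z0: "z0 \<in> ?C" by blast
  have "inv v \<otimes> z \<in> ?C" if "z \<in> ?C" for z
  proof -
    have z: "z \<in> carrier G" "odd (card (f2_reps G A B z))" using that unfolding f2_mult_eq by auto
    have "card (f2_reps G (A \<union> (\<otimes>) v ` A) B z)
        = card (f2_reps G A B z) + card (f2_reps G A B (inv v \<otimes> z))"
      using card_f2_reps_Un[OF disj A(2) finite_imageI[OF A(2)] B(2), of G z]
        card_f2_reps_left_translate[OF v A(1) B(1) z(1)] by linarith
    then have "even (card (f2_reps G A B z) + card (f2_reps G A B (inv v \<otimes> z)))"
      using even_card_f2_reps[OF zero z(1)] by simp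
    then show ?thesis using z v unfolding f2_mult_eq by simp
  qed
  moreover have "?C \<subseteq> carrier G" unfolding f2_mult_eq by blast
  ultimately have "inv v = \<one>"
    using left_translation_stable_imp_one[OF tf inv_closed[OF v] _ finite_f2_mult[OF A(2) B(2)] z0]
    by blast
  then have "v = \<one>" using v by simp
  moreover have "(\<otimes>) \<one> ` A = (\<lambda>x. x) ` A" by (rule image_cong) (use A(1) in auto)
  ultimately have "A = {}" using disj by simp
  then show False using z0 unfolding f2_mult_eq f2_reps_def by simp
qed

lemma f2_mult_doubleton_ne_empty:
  assumes tf: "torsion_free G" and ab: "a \<in> carrier G" "b \<in> carrier G" "a \<noteq> b"
    and B: "B \<subseteq> carrier G" "finite B" "y0 \<in> B"
  shows "f2_mult G {a, b} B \<noteq> {}"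
proof
  assume zero: "f2_mult G {a, b} B = {}"
  have stable: "inv b \<otimes> a \<otimes> y \<in> B" if y: "y \<in> B" for y
  proof -
    have yc: "y \<in> carrier G" using y B by auto
    have "(a, y) \<in> f2_reps G {a, b} B (a \<otimes> y)" using y unfolding f2_reps_def by simp
    moreover have "even (card (f2_reps G {a, b} B (a \<otimes> y)))"
      using even_card_f2_reps[OF zero] ab yc by simp
    ultimately have "f2_reps G {a, b} B (a \<otimes> y) \<noteq> {(a, y)}" by auto
    with \<open>(a, y) \<in> f2_reps G {a, b} B (a \<otimes> y)\<close>
    obtain q where q: "q \<in> f2_reps G {a, b} B (a \<otimes> y)" "q \<noteq> (a, y)" by blast
    then obtain h y' where hy': "q = (h, y')" "h \<in> {a, b}" "y' \<in> B" "h \<otimes> y' = a \<otimes> y"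
      unfolding f2_reps_def by blast
    have y'c: "y' \<in> carrier G" using hy' B by auto
    have "h = b"
    proof (rule ccontr)
      assume "h \<noteq> b"
      then have "h = a" using hy'(2) by simp
      then have "y' = y" using hy'(4) ab yc y'c by simp
      then show False using q(2) hy'(1) \<open>h = a\<close> by simp
    qed
    then have "y' = inv b \<otimes> a \<otimes> y" using hy'(4) ab yc y'c by (simp add: inv_solve_left m_assoc)
    then show ?thesis using hy'(3) by simp
  qed
  have "inv b \<otimes> a = \<one>"
    by (rule left_translation_stable_imp_one[OF tf _ B stable]) (use ab in simp)
  then show False using ab left_quot_eq_one_iff[of b a] unfolding left_quot_def by simp
qed

lemma f2_mult_ne_empty_of_left_quot_eq:
  assumes tf: "torsion_free G" and abcd: "{a, b, c, d} \<subseteq> carrier G" "distinct [a, b, c, d]"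
    and eq: "left_quot G (a, b) = left_quot G (c, d)"
    and B: "B \<subseteq> carrier G" "finite B" "y0 \<in> B"
  shows "f2_mult G {a, b, c, d} B \<noteq> {}"
proof
  assume zero: "f2_mult G {a, b, c, d} B = {}"
  define v where "v = c \<otimes> inv a"
  have carr: "a \<in> carrier G" "b \<in> carrier G" "c \<in> carrier G" "d \<in> carrier G" "v \<in> carrier G"
    using abcd unfolding v_def by auto
  have "v \<otimes> a = c" using carr unfolding v_def by (simp add: m_assoc)
  moreover have "v \<otimes> b = d"
  proof -
    have "d = c \<otimes> left_quot G (a, b)" using eq carr by simp
    then show ?thesis using carr unfolding v_def left_quot_def by (simp add: m_assoc)
  qed
  ultimately have vab: "(\<otimes>) v ` {a, b} = {c, d}" by auto
  have "{a, b} \<union> (\<otimes>) v ` {a, b} = {a, b, c, d}" "{a, b} \<inter> (\<otimes>) v ` {a, b} = {}"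
    using vab abcd(2) by auto
  then have "f2_mult G {a, b} B = {}"
    using f2_mult_eq_empty_of_translate_Un[OF tf carr(5) _ _ B(1,2)] zero carr by simp
  then show False using f2_mult_doubleton_ne_empty[OF tf carr(1,2) _ B] abcd by simp
qed

lemma Z_neighbours_eq:
  assumes A: "A \<subseteq> carrier G" and B: "B \<subseteq> carrier G" and g: "g \<in> B"
  shows "{g'. Z_adj G A B g g'} = (\<lambda>s. s \<otimes> g) ` left_quot G ` adj_pairs G A B g"
proof (intro equalityI subsetI)
  have gc: "g \<in> carrier G" using g B by auto
  fix g' assume "g' \<in> {g'. Z_adj G A B g g'}"
  then obtain h h' where z: "g' \<in> B" "g \<noteq> g'" "h \<in> A" "h' \<in> A" "h \<otimes> g = h' \<otimes> g'"
    unfolding Z_adj_def by blast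
  have c: "h \<in> carrier G" "h' \<in> carrier G" "g' \<in> carrier G" using z A B by auto
  have g': "g' = left_quot G (h', h) \<otimes> g"
    using z(5) c gc unfolding left_quot_def by (simp add: inv_solve_left m_assoc)
  have "h' \<noteq> h" using z(2,5) c gc by auto
  then have "(h', h) \<in> adj_pairs G A B g"
    using z g' unfolding adj_pairs_def distinct_pairs_def by auto
  then show "g' \<in> (\<lambda>s. s \<otimes> g) ` left_quot G ` adj_pairs G A B g" using g' by blast
next
  have gc: "g \<in> carrier G" using g B by auto
  fix x assume "x \<in> (\<lambda>s. s \<otimes> g) ` left_quot G ` adj_pairs G A B g"
  then obtain h h' where p: "(h, h') \<in> adj_pairs G A B g" "x = left_quot G (h, h') \<otimes> g" by auto
  then have hh': "h \<in> A" "h' \<in> A" "h \<noteq> h'" "x \<in> B"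
    unfolding adj_pairs_def distinct_pairs_def by auto
  have c: "h \<in> carrier G" "h' \<in> carrier G" using hh' A by auto
  have eq: "h' \<otimes> g = h \<otimes> x" using p(2) c gc by (simp add: m_assoc[symmetric] left_quot_closed)
  have "left_quot G (h, h') \<noteq> \<one>" using c hh'(3) left_quot_eq_one_iff by blast
  then have "g \<noteq> x" using p(2) c gc by (simp add: left_quot_closed)
  then show "x \<in> {g'. Z_adj G A B g g'}"
    unfolding Z_adj_def using g hh' eq by blast
qed

lemma Z_degree_eq_card_left_quot_adj_pairs:
  assumes "A \<subseteq> carrier G" "B \<subseteq> carrier G" "g \<in> B"
  shows "Z_degree G A B g = card (left_quot G ` adj_pairs G A B g)"
proof -
  have "g \<in> carrier G" using assms by auto
  then have "inj_on (\<lambda>s. s \<otimes> g) (carrier G)" by (intro inj_onI) simp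
  moreover have "left_quot G ` adj_pairs G A B g \<subseteq> carrier G"
    using assms(1) by (auto simp: adj_pairs_def distinct_pairs_def intro: left_quot_closed)
  ultimately show ?thesis
    unfolding Z_degree_def Z_neighbours_eq[OF assms] by (simp add: card_image inj_on_subset)
qed

lemma f2_reps_eq_insert_column:
  assumes A: "A \<subseteq> carrier G" and B: "B \<subseteq> carrier G" and g: "g \<in> B" and b: "b \<in> A"
  shows "f2_reps G A B (b \<otimes> g)
    = insert (b, g) ((\<lambda>k. (k, left_quot G (k, b) \<otimes> g)) ` {k. (k, b) \<in> adj_pairs G A B g})"
    (is "_ = insert _ (?rep ` ?col)")
proof (intro equalityI subsetI)
  have c: "b \<in> carrier G" "g \<in> carrier G" using A B b g by auto
  fix q assume "q \<in> f2_reps G A B (b \<otimes> g)"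
  then obtain h y where q: "q = (h, y)" "h \<in> A" "y \<in> B" "h \<otimes> y = b \<otimes> g"
    unfolding f2_reps_def by blast
  have hy: "h \<in> carrier G" "y \<in> carrier G" using q A B by auto
  show "q \<in> insert (b, g) (?rep ` ?col)"
  proof (cases "h = b")
    case True
    then show ?thesis using q hy c by simp
  next
    case False
    have "y = left_quot G (h, b) \<otimes> g"
      using q(4) hy c unfolding left_quot_def by (simp add: inv_solve_left m_assoc)
    then show ?thesis
      using q False b unfolding adj_pairs_def distinct_pairs_def by auto
  qed
next
  have c: "b \<in> carrier G" "g \<in> carrier G" using A B b g by auto
  fix q assume "q \<in> insert (b, g) (?rep ` ?col)"
  then consider "q = (b, g)" | k where "k \<in> ?col" "q = ?rep k" by blast
  then show "q \<in> f2_reps G A B (b \<otimes> g)"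
  proof cases
    case 1
    then show ?thesis using b g unfolding f2_reps_def by simp
  next
    case 2
    then have k: "k \<in> A" "left_quot G (k, b) \<otimes> g \<in> B"
      unfolding adj_pairs_def distinct_pairs_def by auto
    then have "k \<otimes> (left_quot G (k, b) \<otimes> g) = b \<otimes> g"
      using A c by (simp add: m_assoc[symmetric] left_quot_closed subset_iff)
    then show ?thesis using k 2 unfolding f2_reps_def by simp
  qed
qed

lemma odd_card_adj_pairs_column:
  assumes A: "A \<subseteq> carrier G" "finite A" and B: "B \<subseteq> carrier G"
    and zero: "f2_mult G A B = {}" and g: "g \<in> B" and b: "b \<in> A"
  shows "odd (card {k. (k, b) \<in> adj_pairs G A B g})"
proof -
  let ?col = "{k. (k, b) \<in> adj_pairs G A B g}" and ?rep = "\<lambda>k. (k, left_quot G (k, b) \<otimes> g)"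
  have col_sub: "?col \<subseteq> A - {b}" unfolding adj_pairs_def distinct_pairs_def by auto
  then have "(b, g) \<notin> ?rep ` ?col" by auto
  moreover have "inj_on ?rep ?col" by (auto intro: inj_onI)
  moreover have "finite ?col" using col_sub A(2) finite_subset by blast
  ultimately have "card (f2_reps G A B (b \<otimes> g)) = Suc (card ?col)"
    by (simp add: f2_reps_eq_insert_column[OF A(1) B g b] card_image)
  moreover have "b \<otimes> g \<in> carrier G" using A(1) B b g by auto
  ultimately show ?thesis using even_card_f2_reps[OF zero] by fastforce
qed

lemma obtain_adj_pairs_transversal:
  assumes A: "A \<subseteq> carrier G" "finite A" and B: "B \<subseteq> carrier G"
    and zero: "f2_mult G A B = {}" and g: "g \<in> B"
  obtains X where "X \<subseteq> adj_pairs G A B g" "snd ` X = A" "card X = card A"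
proof -
  have "\<exists>k. (k, b) \<in> adj_pairs G A B g" if "b \<in> A" for b
  proof -
    have "{k. (k, b) \<in> adj_pairs G A B g} \<noteq> {}"
      using odd_card_adj_pairs_column[OF A B zero g that] by (metis card.empty even_zero)
    then show ?thesis by blast
  qed
  then obtain X where X: "X \<subseteq> adj_pairs G A B g" "inj_on snd X" "snd ` X = A"
    by (rule obtain_snd_section)
  then show thesis using that card_image by metis
qed

lemma card_left_quot_adj_pairs_ne_pred:
  assumes A: "A \<subseteq> carrier G" "finite A" "even (card A)" and B: "B \<subseteq> carrier G"
    and zero: "f2_mult G A B = {}" and g: "g \<in> B"
  shows "card (left_quot G ` adj_pairs G A B g) + 1 \<noteq> card (left_quot G ` distinct_pairs A)"
proof
  let ?P = "distinct_pairs A" and ?Q = "adj_pairs G A B g"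
  assume card_eq: "card (left_quot G ` ?Q) + 1 = card (left_quot G ` ?P)"
  have QP: "left_quot G ` ?Q \<subseteq> left_quot G ` ?P" using adj_pairs_subset by (rule image_mono)
  have finP: "finite (left_quot G ` ?P)" using A(2) by (simp add: finite_distinct_pairs)
  have "left_quot G ` ?P \<noteq> left_quot G ` ?Q" using card_eq by auto
  then obtain t0 where t0: "t0 \<in> left_quot G ` ?P" "t0 \<notin> left_quot G ` ?Q" using QP by blast
  have Q_eq: "left_quot G ` ?Q = left_quot G ` ?P - {t0}"
  proof (rule card_subset_eq)
    show "left_quot G ` ?Q \<subseteq> left_quot G ` ?P - {t0}" using QP t0(2) by blast
    show "card (left_quot G ` ?Q) = card (left_quot G ` ?P - {t0})"
      using card_eq t0(1) finP by simp
  qed (use finP in simp)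
  obtain a b where ab: "(a, b) \<in> ?P" "t0 = left_quot G (a, b)" using t0(1) by auto
  have abA: "a \<in> A" "b \<in> A" "a \<noteq> b" using ab(1) unfolding distinct_pairs_def by auto
  have "{k. (k, b) \<in> ?Q} = A - {a, b}"
  proof (intro equalityI subsetI)
    fix k assume k: "k \<in> {k. (k, b) \<in> ?Q}"
    then have "k \<noteq> a" using t0(2) ab(2) by force
    then show "k \<in> A - {a, b}" using k unfolding adj_pairs_def distinct_pairs_def by auto
  next
    fix k assume k: "k \<in> A - {a, b}"
    then have kP: "(k, b) \<in> ?P" using abA unfolding distinct_pairs_def by auto
    have "left_quot G (k, b) \<noteq> t0"
      using k abA A(1) ab(2) left_quot_eq_iff_fst by (simp add: subset_iff)
    then have "left_quot G (k, b) \<in> left_quot G ` ?Q" using kP Q_eq by simp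
    then obtain q where "q \<in> ?Q" "left_quot G (k, b) = left_quot G q" by blast
    then show "k \<in> {k. (k, b) \<in> ?Q}" using kP unfolding adj_pairs_def by simp
  qed
  moreover have "card (A - {a, b}) = card A - 2" using abA A(2) by (simp add: card_Diff_subset)
  ultimately have "odd (card A - 2)" using odd_card_adj_pairs_column[OF A(1,2) B zero g abA(2)] by simp
  moreover have "card {a, b} \<le> card A" using abA A(2) by (intro card_mono) auto
  ultimately show False using A(3) abA(3) by simp
qed

lemma card_left_quot_adj_pairs_ge_3:
  assumes tf: "torsion_free G" and A: "A \<subseteq> carrier G" "card A = 4"
    and excess: "card (distinct_pairs A) = card (left_quot G ` distinct_pairs A) + 2"
    and B: "B \<subseteq> carrier G" "finite B" and zero: "f2_mult G A B = {}" and g: "g \<in> B"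
  shows "3 \<le> card (left_quot G ` adj_pairs G A B g)"
proof (rule ccontr)
  let ?P = "distinct_pairs A" and ?Q = "adj_pairs G A B g" and ?f = "left_quot G"
  assume "\<not> ?thesis"
  then have small: "card (?f ` ?Q) \<le> 2" by simp
  have finA: "finite A" using A(2) by (metis card.infinite zero_neq_numeral)
  have QP: "?Q \<subseteq> ?P" by (rule adj_pairs_subset)
  interpret fibre_involution ?P prod.swap ?f
    using fibre_involution_left_quot[OF tf A(1) finA] .
  obtain X where X: "X \<subseteq> ?Q" "snd ` X = A" and card_X: "card X = 4"
    using obtain_adj_pairs_transversal[OF A(1) finA B(1) zero g] A(2) by metis
  have XP: "X \<subseteq> ?P" using X(1) QP by blast
  have "card (?f ` X) \<le> card (?f ` ?Q)"
    using X(1) finite_subset[OF QP finite_distinct_pairs[OF finA]] by (intro card_mono) auto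
  then have card_fX: "card (?f ` X) \<le> 2" using small by simp
  have no_triple_X: False
    if "p \<in> X" "q \<in> X" "r \<in> X" "p \<noteq> q" "p \<noteq> r" "q \<noteq> r" "?f p = ?f q" "?f p = ?f r" for p q r
    using no_triple_collision[OF excess, of p q r] that XP by blast
  obtain p1 p2 p3 p4 where ps: "X = {p1, p2, p3, p4}" "distinct [p1, p2, p3, p4]"
      "?f p1 = ?f p2" "?f p3 = ?f p4"
    by (rule two_collisions_of_card_image_le_2[OF card_X card_fX no_triple_X])
  have P: "p1 \<in> ?P" "p2 \<in> ?P" "p3 \<in> ?P" "p4 \<in> ?P" using ps(1) XP by auto
  have "{p3, p4} = {prod.swap p1, prod.swap p2}"
    using collision_unique[OF excess P] ps(2-4) by (auto simp: doubleton_eq_iff)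
  then have "{snd p3, snd p4} = {fst p1, fst p2}" by (auto simp: doubleton_eq_iff)
  then have A_eq: "A = {fst p1, snd p1, fst p2, snd p2}" using X(2) ps(1) by auto
  then have "card (set [fst p1, snd p1, fst p2, snd p2]) = length [fst p1, snd p1, fst p2, snd p2]"
    using A(2) by simp
  then have "distinct [fst p1, snd p1, fst p2, snd p2]" by (rule card_distinct)
  moreover have "?f (fst p1, snd p1) = ?f (fst p2, snd p2)" using ps(3) by simp
  ultimately have "f2_mult G A B \<noteq> {}"
    using f2_mult_ne_empty_of_left_quot_eq[OF tf _ _ _ B] A_eq A(1) g by simp
  then show False using zero by simp
qed

end


theorem mainTheorem19:
  fixes G :: "('a, 'b) monoid_scheme" and A B :: "'a set" and g :: 'a
  assumes "group G"
    and "torsion_free G"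
    and "zero_divisor_f2 G A"
    and "card A = 4"
    and "card (S_set G A) = 10"
    and "is_mate G A B"
    and "g \<in> B"
  shows "Z_degree G A B g \<in> {3, 4, 5, 6, 7, 8, 10}"
proof -
  interpret group G by fact
  have A: "A \<subseteq> carrier G" "finite A"
    using assms(3) unfolding zero_divisor_f2_def f2_elem_def by auto
  have B: "B \<subseteq> carrier G" "finite B" and zero: "f2_mult G A B = {}"
    using assms(6) unfolding is_mate_def f2_elem_def by auto
  have S: "card (left_quot G ` distinct_pairs A) = 10"
    using assms(5) by (simp add: S_set_eq_image_left_quot)
  have excess: "card (distinct_pairs A) = card (left_quot G ` distinct_pairs A) + 2"
    using card_distinct_pairs[OF A(2)] assms(4) S by simp
  have "card (left_quot G ` adj_pairs G A B g) \<le> card (left_quot G ` distinct_pairs A)"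
    by (intro card_mono finite_imageI finite_distinct_pairs A(2) image_mono adj_pairs_subset)
  then have "card (left_quot G ` adj_pairs G A B g) \<le> 10" using S by simp
  moreover have "card (left_quot G ` adj_pairs G A B g) \<noteq> 9"
    using card_left_quot_adj_pairs_ne_pred[OF A _ B(1) zero assms(7)] assms(4) S by simp
  moreover have "card (left_quot G ` adj_pairs G A B g) \<ge> 3"
    by (rule card_left_quot_adj_pairs_ge_3[OF assms(2) A(1) assms(4) excess B zero assms(7)])
  ultimately show ?thesis
    unfolding Z_degree_eq_card_left_quot_adj_pairs[OF A(1) B(1) assms(7)] by auto
qed

end
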